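(* Let $\mathfrak{S}=(\mathcal{X},\mathsf{S},\gamma,(\Lambda_{a})_{a\in\mathcal{A}})$ be a spectral decomposition system for the Euclidean space $\mathfrak{H}$ and let $\varphi\in\Gamma_0(\mathcal{X})$ be $\mathsf{S}$-invariant. Then: (i) $\varphi\circ\gamma$ is essentially smooth if and only if $\varphi$ is essentially smooth; (ii) $\varphi\circ\gamma$ is essentially strictly convex if and only if $\varphi$ is essentially strictly convex; (iii) $\varphi\circ\gamma$ is a Legendre function if and only if $\varphi$ is a Legendre function.
   Context: A Euclidean space is a finite-dimensional real inner product space; inner products are written $\langle\cdot,\cdot\rangle$ and norms $\|\cdot\|$. Let $\mathfrak{H}$ and $\mathcal{X}$ be Euclidean spaces, let $\mathsf{S}$ be a group acting on $\mathcal{X}$ by linear isometries, let $\gamma\colon\mathfrak{H}\to\mathcal{X}$, and let $(\Lambda_a)_{a\in\mathcal{A}}$ be a family of linear operators from $\mathcal{X}$ to $\mathfrak{H}$. The orbit of $x$ is $\mathsf{S}\cdot x=\{s\cdot x: s\in\mathsf{S}\}$; a map $f$ on $\mathcal{X}$ is $\mathsf{S}$-invariant if $f(s\cdot x)=f(x)$ for all $s,x$. The tuple is a spectral decomposition system for $\mathfrak{H}$ if: [A] every $\Lambda_a$ is an isometry; [B] there exists an $\mathsf{S}$-invariant $\tau\colon\mathcal{X}\to\mathcal{X}$ with $\tau(x)\in\mathsf{S}\cdot x$ for all $x$ and $\gamma\circ\Lambda_a=\tau$ for all $a$; [C] for every $X\in\mathfrak{H}$ there is $a$ with $X=\Lambda_a\gamma(X)$;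 [D] $\langle X,Y\rangle\leq\langle\gamma(X),\gamma(Y)\rangle$ for all $X,Y\in\mathfrak{H}$. $\Gamma_0(\mathcal{H})$ is the set of proper lower semicontinuous convex functions $\mathcal{H}\to\left]-\infty,+\infty\right]$; $\partial g(x)=\{u:\langle z-x,u\rangle+g(x)\leq g(z)\ \forall z\}$. A function $g\in\Gamma_0(\mathcal{H})$ is essentially smooth if $\partial g(x)$ contains at most one element for every $x\in\mathcal{H}$; essentially strictly convex if it is strictly convex on every convex subset of $\operatorname{dom}\partial g=\{x:\partial g(x)\neq\varnothing\}$; a Legendre function if it is both. *)

theory Defs
  imports "HOL-Analysis.Analysis" "HOL-Algebra.Group"
begin

(* Functions H -> ]-oo,+oo] are modelled as maps into ereal. *)

definition proper_fun :: "('a \<Rightarrow> ereal) \<Rightarrow> bool" where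
  "proper_fun f \<longleftrightarrow> (\<forall>x. f x \<noteq> -\<infinity>) \<and> (\<exists>x. f x \<noteq> \<infinity>)"

definition lsc_fun :: "('a::topological_space \<Rightarrow> ereal) \<Rightarrow> bool" where
  "lsc_fun f \<longleftrightarrow> (\<forall>c::ereal. closed {x. f x \<le> c})"

definition convex_fun :: "('a::real_vector \<Rightarrow> ereal) \<Rightarrow> bool" where
  "convex_fun f \<longleftrightarrow> convex {(x, r::real). f x \<le> ereal r}"

definition Gamma0 :: "('a::euclidean_space \<Rightarrow> ereal) set" where
  "Gamma0 = {f. proper_fun f \<and> lsc_fun f \<and> convex_fun f}"

definition subdiff :: "('a::real_inner \<Rightarrow> ereal) \<Rightarrow> 'a \<Rightarrow> 'a set" where
  "subdiff g x = {u. \<forall>z. ereal (inner (z - x) u) + g x \<le> g z}"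

definition dom_subdiff :: "('a::real_inner \<Rightarrow> ereal) \<Rightarrow> 'a set" where
  "dom_subdiff g = {x. subdiff g x \<noteq> {}}"

definition strictly_convex_on_ext :: "'a::real_vector set \<Rightarrow> ('a \<Rightarrow> ereal) \<Rightarrow> bool" where
  "strictly_convex_on_ext C g \<longleftrightarrow>
     (\<forall>x\<in>C. \<forall>y\<in>C. \<forall>t::real. x \<noteq> y \<and> 0 < t \<and> t < 1 \<longrightarrow>
        g (t *\<^sub>R x + (1 - t) *\<^sub>R y) < ereal t * g x + ereal (1 - t) * g y)"

definition essentially_smooth :: "('a::euclidean_space \<Rightarrow> ereal) \<Rightarrow> bool" where
  "essentially_smooth g \<longleftrightarrow> g \<in> Gamma0 \<and> (\<forall>x. \<forall>u\<in>subdiff g x. \<forall>v\<in>subdiff g x. u = v)"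

definition essentially_strictly_convex :: "('a::euclidean_space \<Rightarrow> ereal) \<Rightarrow> bool" where
  "essentially_strictly_convex g \<longleftrightarrow> g \<in> Gamma0 \<and>
     (\<forall>C. convex C \<and> C \<subseteq> dom_subdiff g \<longrightarrow> strictly_convex_on_ext C g)"

definition legendre_fun :: "('a::euclidean_space \<Rightarrow> ereal) \<Rightarrow> bool" where
  "legendre_fun g \<longleftrightarrow> essentially_smooth g \<and> essentially_strictly_convex g"

definition isometric_linear_action ::
  "('g, 'm) monoid_scheme \<Rightarrow> ('g \<Rightarrow> 'x::euclidean_space \<Rightarrow> 'x) \<Rightarrow> bool" where
  "isometric_linear_action G act \<longleftrightarrow> group G \<and>
     (\<forall>s\<in>carrier G. linear (act s) \<and> (\<forall>x. norm (act s x) = norm x)) \<and>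
     (\<forall>s\<in>carrier G. \<forall>t\<in>carrier G. \<forall>x. act (s \<otimes>\<^bsub>G\<^esub> t) x = act s (act t x)) \<and>
     (\<forall>x. act \<one>\<^bsub>G\<^esub> x = x)"

definition orbit :: "('g, 'm) monoid_scheme \<Rightarrow> ('g \<Rightarrow> 'x \<Rightarrow> 'x) \<Rightarrow> 'x \<Rightarrow> 'x set" where
  "orbit G act x = {act s x | s. s \<in> carrier G}"

definition invariant_under ::
  "('g, 'm) monoid_scheme \<Rightarrow> ('g \<Rightarrow> 'x \<Rightarrow> 'x) \<Rightarrow> ('x \<Rightarrow> 'b) \<Rightarrow> bool" where
  "invariant_under G act f \<longleftrightarrow> (\<forall>s\<in>carrier G. \<forall>x. f (act s x) = f x)"

(* (X, S, gamma, (Lambda_a)_{a in A}) is a spectral decomposition system for H;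
   the index set A is the type 'i *)
definition spectral_decomposition_system ::
  "('g, 'm) monoid_scheme \<Rightarrow> ('g \<Rightarrow> 'x::euclidean_space \<Rightarrow> 'x) \<Rightarrow>
   ('h::euclidean_space \<Rightarrow> 'x) \<Rightarrow> ('i \<Rightarrow> 'x \<Rightarrow> 'h) \<Rightarrow> bool" where
  "spectral_decomposition_system G act \<gamma> \<Lambda> \<longleftrightarrow>
     isometric_linear_action G act \<and>
     (\<forall>a. linear (\<Lambda> a)) \<and>
     (\<forall>a. \<forall>x. norm (\<Lambda> a x) = norm x) \<and>
     (\<exists>\<tau>. invariant_under G act \<tau> \<and> (\<forall>x. \<tau> x \<in> orbit G act x) \<and> (\<forall>a. \<gamma> \<circ> \<Lambda> a = \<tau>)) \<and>
     (\<forall>X. \<exists>a. X = \<Lambda> a (\<gamma> X)) \<and>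
     (\<forall>X Y. inner X Y \<le> inner (\<gamma> X) (\<gamma> Y))"

end

theory Submission
  imports Defs
begin

(* Write \<psi> = \<phi> \<circ> \<gamma>. By <X, Y> \<le> <\<gamma> X, \<gamma> Y> and the decompositions X = \<Lambda>\<^sub>a (\<gamma> X), a point
   p with <p, U> \<le> <q, \<gamma> (\<Lambda>\<^sub>a U)> for all U lies in the closed convex hull of the orbit of q,
   hence \<phi> p \<le> \<phi> q. This gives convexity of \<psi> and relates subgradients: \<Lambda>\<^sub>a maps \<partial>\<phi>(x)
   into \<partial>\<psi>(\<Lambda>\<^sub>a x), and Y \<in> \<partial>\<psi>(X) yields \<gamma> Y \<in> \<partial>\<phi>(\<gamma> X), as well as \<Lambda>\<^sub>a\<^sup>* Y \<in> \<partial>\<phi>(\<gamma> X)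
   if X = \<Lambda>\<^sub>a (\<gamma> X) and \<gamma> Y \<in> \<partial>\<phi>(\<Lambda>\<^sub>c\<^sup>* X) if Y = \<Lambda>\<^sub>c (\<gamma> Y). So if \<partial>\<phi> is single-valued then
   Y = \<Lambda>\<^sub>a (\<gamma> Y) is determined by the unique \<gamma> Y, and if \<partial>\<phi> is injective then X = \<Lambda>\<^sub>c (\<gamma> X) is
   determined by the unique \<gamma> X. Essential strict convexity is treated as injectivity of \<partial>,
   because a common subgradient at two points makes a convex function affine between them. *)

lemma linear_isometry_inner:
  assumes "linear f" "\<And>x. norm (f x) = norm x"
  shows "inner (f x) (f y) = inner x y"
  using assms by (smt (verit) dot_norm linear_add)

lemma linear_isometry_inj:
  assumes "linear f" "\<And>x. norm (f x) = norm x"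
  shows "inj f"
  using assms by (metis linear_injective_0 norm_eq_zero)

lemma linear_isometry_adjoint_inverse:
  fixes f :: "'a::euclidean_space \<Rightarrow> 'b::euclidean_space"
  assumes "linear f" "\<And>x. norm (f x) = norm x" and "norm (adjoint f y) = norm y"
  shows "f (adjoint f y) = y"
proof -
  let ?w = "adjoint f y"
  have "inner y (f ?w) = (norm ?w)\<^sup>2"
    using adjoint_works[OF assms(1), of ?w y] by (simp add: inner_commute power2_norm_eq_inner)
  moreover have "(norm (y - f ?w))\<^sup>2 = (norm y)\<^sup>2 + (norm (f ?w))\<^sup>2 - 2 * inner y (f ?w)"
    by (simp add: power2_norm_eq_inner inner_diff_left inner_diff_right inner_commute)
  moreover have "norm (f ?w) = norm y" "norm ?w = norm y"
    using assms(2,3) by simp_all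
  ultimately have "(norm (y - f ?w))\<^sup>2 = 0"
    by (simp only:)
  then show ?thesis by simp
qed

lemma convex_funD:
  assumes "convex_fun f" "f x \<le> ereal r" "f y \<le> ereal s" "0 \<le> t" "t \<le> 1"
  shows "f ((1 - t) *\<^sub>R x + t *\<^sub>R y) \<le> ereal ((1 - t) * r + t * s)"
proof -
  have "(1 - t) *\<^sub>R (x, r) + t *\<^sub>R (y, s) \<in> {(x, r). f x \<le> ereal r}"
    using assms by (intro convexD) (auto simp: convex_fun_def)
  then show ?thesis by simp
qed

lemma convex_funI:
  assumes "\<And>x y r s t. f x \<le> ereal r \<Longrightarrow> f y \<le> ereal s \<Longrightarrow> 0 \<le> t \<Longrightarrow> t \<le> 1 \<Longrightarrow>
      f ((1 - t) *\<^sub>R x + t *\<^sub>R y) \<le> ereal ((1 - t) * r + t * s)"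
  shows "convex_fun f"
  unfolding convex_fun_def convex_alt using assms by auto

lemma convex_fun_sublevel:
  assumes "convex_fun f"
  shows "convex {x. f x \<le> ereal c}"
  unfolding convex_alt using convex_funD[OF assms, of _ c _ c] by (simp add: algebra_simps)

text \<open>The last hypothesis says that \<open>p\<close> lies in the closed convex hull of \<open>S\<close>.\<close>

lemma lsc_convex_le_if_dominated:
  fixes f :: "'a::euclidean_space \<Rightarrow> ereal"
  assumes "lsc_fun f" "convex_fun f"
    and le: "\<And>y. y \<in> S \<Longrightarrow> f y \<le> c"
    and dominated: "\<And>u. \<exists>y\<in>S. inner p u \<le> inner y u"
  shows "f p \<le> c"
proof (rule ereal_le_real)
  fix r assume "c \<le> ereal r"
  let ?L = "{x. f x \<le> ereal r}"
  show "f p \<le> ereal r"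
  proof (rule ccontr)
    assume "\<not> f p \<le> ereal r"
    moreover have "closed ?L" "convex ?L"
      using assms(1,2) convex_fun_sublevel by (auto simp: lsc_fun_def)
    ultimately obtain a b where ab: "inner a p < b" "\<And>x. x \<in> ?L \<Longrightarrow> b < inner a x"
      using separating_hyperplane_closed_point by (metis mem_Collect_eq)
    obtain y where "y \<in> S" "inner p (- a) \<le> inner y (- a)"
      using dominated by blast
    moreover from \<open>y \<in> S\<close> have "y \<in> ?L"
      using le \<open>c \<le> ereal r\<close> order_trans by blast
    ultimately show False
      using ab by (fastforce simp: inner_commute)
  qed
qed

lemma proper_subdiff_finite:
  assumes "proper_fun g" "u \<in> subdiff g x"
  obtains a where "g x = ereal a"
proof -
  obtain z where "g z \<noteq> \<infinity>"
    using assms(1) by (auto simp: proper_fun_def)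
  moreover have "ereal (inner (z - x) u) + g x \<le> g z"
    using assms(2) by (simp add: subdiff_def)
  ultimately have "g x \<noteq> \<infinity>" by auto
  moreover have "g x \<noteq> -\<infinity>"
    using assms(1) by (simp add: proper_fun_def)
  ultimately show ?thesis using that by (cases "g x") auto
qed

lemma subdiff_if_on_supporting_hyperplane:
  assumes "u \<in> subdiff g z" "g x = ereal (inner (x - z) u) + g z"
  shows "u \<in> subdiff g x"
  unfolding subdiff_def
proof (intro CollectI allI)
  fix w
  have "ereal (inner (w - x) u) + g x = ereal (inner (w - z) u) + g z"
    by (simp add: assms(2) add.assoc[symmetric] inner_diff_left)
  also have "\<dots> \<le> g w"
    using assms(1) by (simp add: subdiff_def)
  finally show "ereal (inner (w - x) u) + g x \<le> g w" .
qed

text \<open>For \<open>g \<in> Gamma0\<close> this is essential smoothness of the conjugate, whose subdifferential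
  is the inverse of \<open>subdiff g\<close>.\<close>

definition injective_subdiff :: "('a::real_inner \<Rightarrow> ereal) \<Rightarrow> bool" where
  "injective_subdiff g \<longleftrightarrow> (\<forall>x y u. u \<in> subdiff g x \<longrightarrow> u \<in> subdiff g y \<longrightarrow> x = y)"

lemma common_subgradient_affine_on_segment:
  assumes "convex_fun g" "proper_fun g" "u \<in> subdiff g x" "u \<in> subdiff g y" "0 \<le> t" "t \<le> 1"
  shows "g ((1 - t) *\<^sub>R x + t *\<^sub>R y) = ereal (t * inner (y - x) u) + g x"
    and "u \<in> subdiff g ((1 - t) *\<^sub>R x + t *\<^sub>R y)"
proof -
  let ?z = "(1 - t) *\<^sub>R x + t *\<^sub>R y"
  obtain a b where a: "g x = ereal a" and b: "g y = ereal b"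
    using proper_subdiff_finite assms(2-4) by metis
  have "ereal (inner (y - x) u) + g x \<le> g y" "ereal (inner (x - y) u) + g y \<le> g x"
    using assms(3,4) by (simp_all add: subdiff_def)
  then have "inner (y - x) u + a \<le> b" "inner (x - y) u + b \<le> a"
    using a b by simp_all
  then have b_eq: "b = inner (y - x) u + a"
    by (simp add: inner_diff_left)
  have z_x: "inner (?z - x) u = t * inner (y - x) u"
    by (simp add: inner_diff_left inner_add_left algebra_simps)
  have "g ?z \<le> ereal ((1 - t) * a + t * b)"
    using convex_funD[OF assms(1)] a b assms(5,6) by simp
  also have "\<dots> = ereal (t * inner (y - x) u) + g x"
    by (simp add: a b_eq algebra_simps)
  moreover have "ereal (inner (?z - x) u) + g x \<le> g ?z"
    using assms(3) unfolding subdiff_def by blast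
  ultimately show eq: "g ?z = ereal (t * inner (y - x) u) + g x"
    using z_x by simp
  show "u \<in> subdiff g ?z"
    using subdiff_if_on_supporting_hyperplane[OF assms(3)] eq z_x by simp
qed

lemma essentially_strictly_convex_imp_injective_subdiff:
  assumes "essentially_strictly_convex g"
  shows "injective_subdiff g"
  unfolding injective_subdiff_def
proof (intro allI impI, rule ccontr)
  fix x y u
  assume ux: "u \<in> subdiff g x" and uy: "u \<in> subdiff g y" and "x \<noteq> y"
  have g: "convex_fun g" "proper_fun g"
    using assms by (auto simp: essentially_strictly_convex_def Gamma0_def)
  have "closed_segment x y \<subseteq> dom_subdiff g"
  proof
    fix z assume "z \<in> closed_segment x y"
    then obtain t where "0 \<le> t" "t \<le> 1" "z = (1 - t) *\<^sub>R x + t *\<^sub>R y"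
      by (auto simp: closed_segment_def)
    then show "z \<in> dom_subdiff g"
      using common_subgradient_affine_on_segment(2)[OF g ux uy] by (auto simp: dom_subdiff_def)
  qed
  then have "strictly_convex_on_ext (closed_segment x y) g"
    using assms by (simp add: essentially_strictly_convex_def)
  then have "g (t *\<^sub>R x + (1 - t) *\<^sub>R y) < ereal t * g x + ereal (1 - t) * g y"
    if "0 < t" "t < 1" for t
    unfolding strictly_convex_on_ext_def using that \<open>x \<noteq> y\<close> ends_in_segment[of x y] by blast
  from this[of "1/2"]
  have "g ((1 - 1/2) *\<^sub>R x + (1/2) *\<^sub>R y) < ereal (1/2) * g x + ereal (1/2) * g y"
    by (simp add: add.commute)
  moreover obtain a where "g x = ereal a"
    using proper_subdiff_finite g(2) ux by metis
  moreover have "g ((1 - 1/2) *\<^sub>R x + (1/2) *\<^sub>R y) = ereal (1/2 * inner (y - x) u) + g x"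
    "g y = ereal (inner (y - x) u) + g x"
    using common_subgradient_affine_on_segment(1)[OF g ux uy, of "1/2"] common_subgradient_affine_on_segment(1)[OF g ux uy, of 1]
    by simp_all
  ultimately show False
    by (simp add: field_simps)
qed

lemma subgradient_at_endpoint_if_not_strictly_convex:
  assumes "u \<in> subdiff g z" "z = t *\<^sub>R x + (1 - t) *\<^sub>R y" "0 < t" "t < 1"
    and "g x = ereal a" "g y = ereal b" "ereal (t * a + (1 - t) * b) \<le> g z"
  shows "u \<in> subdiff g x"
proof -
  have sub: "ereal (inner (w - z) u) + g z \<le> g w" for w
    using assms(1) by (simp add: subdiff_def)
  obtain c where c: "g z = ereal c"
    using sub[of x] assms(5,7) by (cases "g z") auto
  define p where "p = a - c - inner (x - z) u"
  define q where "q = b - c - inner (y - z) u"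
  have "0 \<le> p" "0 \<le> q"
    using sub[of x] sub[of y] assms(5,6) c by (simp_all add: p_def q_def)
  moreover have "t * inner (x - z) u + (1 - t) * inner (y - z) u = 0"
    by (simp add: assms(2) inner_diff_left inner_add_left algebra_simps)
  then have "t * p + (1 - t) * q \<le> 0"
    using assms(7) c by (simp add: p_def q_def algebra_simps)
  ultimately have "p = 0"
    using assms(3,4) by (smt (verit) mult_nonneg_nonneg mult_pos_pos)
  then have "g x = ereal (inner (x - z) u) + g z"
    by (simp add: assms(5) c p_def)
  then show ?thesis
    by (rule subdiff_if_on_supporting_hyperplane[OF assms(1)])
qed

lemma injective_subdiff_imp_essentially_strictly_convex:
  fixes g :: "'a::euclidean_space \<Rightarrow> ereal"
  assumes "g \<in> Gamma0" "injective_subdiff g"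
  shows "essentially_strictly_convex g"
  unfolding essentially_strictly_convex_def strictly_convex_on_ext_def
proof (intro conjI assms allI impI ballI, rule ccontr)
  fix C and x y :: 'a and t :: real
  let ?z = "t *\<^sub>R x + (1 - t) *\<^sub>R y"
  assume C: "convex C \<and> C \<subseteq> dom_subdiff g" and "x \<in> C" "y \<in> C"
    and xyt: "x \<noteq> y \<and> 0 < t \<and> t < 1"
    and not_strict: "\<not> g ?z < ereal t * g x + ereal (1 - t) * g y"
  have "?z \<in> C"
    using C \<open>x \<in> C\<close> \<open>y \<in> C\<close> xyt by (intro convexD) auto
  then obtain u where u: "u \<in> subdiff g ?z"
    using C by (auto simp: dom_subdiff_def)
  obtain v w where "v \<in> subdiff g x" "w \<in> subdiff g y"
    using C \<open>x \<in> C\<close> \<open>y \<in> C\<close> unfolding dom_subdiff_def by blast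
  moreover have "proper_fun g"
    using assms(1) by (simp add: Gamma0_def)
  ultimately obtain a b where a: "g x = ereal a" and b: "g y = ereal b"
    by (metis proper_subdiff_finite)
  have le: "ereal (t * a + (1 - t) * b) \<le> g ?z"
    using not_strict a b by simp
  have "u \<in> subdiff g x"
    by (rule subgradient_at_endpoint_if_not_strictly_convex[OF u refl _ _ a b le]) (use xyt in auto)
  moreover have "u \<in> subdiff g y"
  proof (rule subgradient_at_endpoint_if_not_strictly_convex[OF u _ _ _ b a])
    show "?z = (1 - t) *\<^sub>R y + (1 - (1 - t)) *\<^sub>R x"
      by simp
    show "ereal ((1 - t) * b + (1 - (1 - t)) * a) \<le> g ?z"
      using le by (simp add: algebra_simps)
  qed (use xyt in auto)
  ultimately show False
    using assms(2) xyt by (auto simp: injective_subdiff_def)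
qed

lemma essentially_strictly_convex_iff_injective_subdiff:
  "essentially_strictly_convex g \<longleftrightarrow> g \<in> Gamma0 \<and> injective_subdiff g"
  using essentially_strictly_convex_imp_injective_subdiff injective_subdiff_imp_essentially_strictly_convex
  by (auto simp: essentially_strictly_convex_def)

locale spectral_decomposition =
  fixes G :: "('g, 'm) monoid_scheme"
    and act :: "'g \<Rightarrow> 'x::euclidean_space \<Rightarrow> 'x"
    and \<gamma> :: "'h::euclidean_space \<Rightarrow> 'x"
    and \<Lambda> :: "'i \<Rightarrow> 'x \<Rightarrow> 'h"
  assumes system: "spectral_decomposition_system G act \<gamma> \<Lambda>"
begin

lemma group: "group G"
  using system by (simp add: spectral_decomposition_system_def isometric_linear_action_def)

lemma act_linear_isometry:
  assumes "s \<in> carrier G"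
  shows "linear (act s)" "norm (act s x) = norm x"
  using system assms by (simp_all add: spectral_decomposition_system_def isometric_linear_action_def)

lemma act_act_inv:
  assumes "s \<in> carrier G"
  shows "act s (act (inv\<^bsub>G\<^esub> s) x) = x"
proof -
  have "act s (act (inv\<^bsub>G\<^esub> s) x) = act (s \<otimes>\<^bsub>G\<^esub> inv\<^bsub>G\<^esub> s) x"
    using system assms group.inv_closed[OF group]
    by (simp add: spectral_decomposition_system_def isometric_linear_action_def)
  also have "\<dots> = x"
    using system assms group.r_inv[OF group]
    by (simp add: spectral_decomposition_system_def isometric_linear_action_def)
  finally show ?thesis .
qed

lemma inner_act:
  assumes "s \<in> carrier G"
  shows "inner w (act s u) = inner (act (inv\<^bsub>G\<^esub> s) w) u"
  by (metis act_act_inv act_linear_isometry assms linear_isometry_inner)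

lemma Lambda_linear: "linear (\<Lambda> a)"
  and Lambda_norm [simp]: "norm (\<Lambda> a x) = norm x"
  using system by (simp_all add: spectral_decomposition_system_def)

lemma inner_Lambda [simp]: "inner (\<Lambda> a x) (\<Lambda> a y) = inner x y"
  using linear_isometry_inner[OF Lambda_linear Lambda_norm] .

lemma inj_Lambda: "inj (\<Lambda> a)"
  using linear_isometry_inj[OF Lambda_linear Lambda_norm] .

lemma Lambda_gamma:
  obtains a where "X = \<Lambda> a (\<gamma> X)"
  using system unfolding spectral_decomposition_system_def by blast

lemma inner_le_inner_gamma: "inner X Y \<le> inner (\<gamma> X) (\<gamma> Y)"
  using system by (simp add: spectral_decomposition_system_def)

lemma gamma_Lambda_in_orbit: "\<exists>s\<in>carrier G. \<gamma> (\<Lambda> a x) = act s x"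
proof -
  obtain \<tau> where "\<forall>x. \<tau> x \<in> orbit G act x" "\<gamma> \<circ> \<Lambda> a = \<tau>"
    using system by (auto simp: spectral_decomposition_system_def)
  then have "\<gamma> (\<Lambda> a x) \<in> orbit G act x"
    by auto
  then show ?thesis
    by (auto simp: orbit_def)
qed

lemma inner_gamma_Lambda: "\<exists>s\<in>carrier G. inner w (\<gamma> (\<Lambda> a u)) = inner (act s w) u"
proof -
  obtain s where s: "s \<in> carrier G" "\<gamma> (\<Lambda> a u) = act s u"
    using gamma_Lambda_in_orbit by blast
  then have "inner w (\<gamma> (\<Lambda> a u)) = inner (act (inv\<^bsub>G\<^esub> s) w) u"
    by (simp add: inner_act)
  moreover have "inv\<^bsub>G\<^esub> s \<in> carrier G"
    using s(1) by (simp add: group group.inv_closed)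
  ultimately show ?thesis
    by blast
qed

lemma norm_gamma [simp]: "norm (\<gamma> X) = norm X"
proof -
  obtain a where "X = \<Lambda> a (\<gamma> X)"
    by (rule Lambda_gamma)
  then show ?thesis
    using Lambda_norm by metis
qed

lemma dist_gamma_le: "dist (\<gamma> X) (\<gamma> Y) \<le> dist X Y"
proof -
  have "(norm (\<gamma> X - \<gamma> Y))\<^sup>2 \<le> (norm (X - Y))\<^sup>2"
    using inner_le_inner_gamma[of X Y] unfolding dot_norm_neg norm_gamma by (simp add: field_simps)
  then show ?thesis
    unfolding dist_norm using norm_ge_zero by (rule power2_le_imp_le)
qed

lemma continuous_gamma: "continuous (at X) \<gamma>"
  unfolding continuous_at_eps_delta using dist_gamma_le le_less_trans by blast

lemma Lambda_gamma_if_adjoint_eq: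
  assumes "adjoint (\<Lambda> a) Y = \<gamma> Y"
  shows "\<Lambda> a (\<gamma> Y) = Y"
  using linear_isometry_adjoint_inverse[OF Lambda_linear Lambda_norm, of a Y] assms by simp

end

locale spectral_function = spectral_decomposition +
  fixes \<phi> :: "'x::euclidean_space \<Rightarrow> ereal"
  assumes Gamma0: "\<phi> \<in> Gamma0"
    and invariant: "invariant_under G act \<phi>"
begin

lemma phi_act [simp]: "s \<in> carrier G \<Longrightarrow> \<phi> (act s x) = \<phi> x"
  using invariant by (simp add: invariant_under_def)

lemma phi_gamma_Lambda [simp]: "\<phi> (\<gamma> (\<Lambda> a x)) = \<phi> x"
  using gamma_Lambda_in_orbit[of a x] by auto

lemma le_if_majorized:
  assumes "\<And>U. inner p U \<le> inner q (\<gamma> (\<Lambda> a U))"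
  shows "\<phi> p \<le> \<phi> q"
proof (rule lsc_convex_le_if_dominated[where S = "orbit G act q"])
  show "lsc_fun \<phi>" "convex_fun \<phi>"
    using Gamma0 by (simp_all add: Gamma0_def)
  show "\<phi> y \<le> \<phi> q" if "y \<in> orbit G act q" for y
    using that by (auto simp: orbit_def)
  show "\<exists>y\<in>orbit G act q. inner p U \<le> inner y U" for U
    using assms[of U] inner_gamma_Lambda[of q a U] by (force simp: orbit_def)
qed

lemma convex_fun_comp_gamma: "convex_fun (\<phi> \<circ> \<gamma>)"
proof (rule convex_funI)
  fix X Y r s and t :: real
  assume "(\<phi> \<circ> \<gamma>) X \<le> ereal r" "(\<phi> \<circ> \<gamma>) Y \<le> ereal s" and t: "0 \<le> t" "t \<le> 1"
  moreover have "convex_fun \<phi>"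
    using Gamma0 by (simp add: Gamma0_def)
  ultimately have w: "\<phi> ((1 - t) *\<^sub>R \<gamma> X + t *\<^sub>R \<gamma> Y) \<le> ereal ((1 - t) * r + t * s)"
    using convex_funD by simp
  let ?Z = "(1 - t) *\<^sub>R X + t *\<^sub>R Y"
  obtain a where a: "?Z = \<Lambda> a (\<gamma> ?Z)"
    by (rule Lambda_gamma)
  have "\<phi> (\<gamma> ?Z) \<le> \<phi> ((1 - t) *\<^sub>R \<gamma> X + t *\<^sub>R \<gamma> Y)"
  proof (rule le_if_majorized)
    fix U
    have "inner (\<gamma> ?Z) U = inner ?Z (\<Lambda> a U)"
      by (metis a inner_Lambda)
    also have "\<dots> = (1 - t) * inner X (\<Lambda> a U) + t * inner Y (\<Lambda> a U)"
      by (simp add: inner_add_left)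
    also have "\<dots> \<le> (1 - t) * inner (\<gamma> X) (\<gamma> (\<Lambda> a U)) + t * inner (\<gamma> Y) (\<gamma> (\<Lambda> a U))"
      using t by (intro add_mono mult_left_mono inner_le_inner_gamma) auto
    also have "\<dots> = inner ((1 - t) *\<^sub>R \<gamma> X + t *\<^sub>R \<gamma> Y) (\<gamma> (\<Lambda> a U))"
      by (simp add: inner_add_left)
    finally show "inner (\<gamma> ?Z) U \<le> inner ((1 - t) *\<^sub>R \<gamma> X + t *\<^sub>R \<gamma> Y) (\<gamma> (\<Lambda> a U))" .
  qed
  with w show "(\<phi> \<circ> \<gamma>) ?Z \<le> ereal ((1 - t) * r + t * s)"
    by simp
qed

lemma Gamma0_comp_gamma: "\<phi> \<circ> \<gamma> \<in> Gamma0"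
proof -
  have proper: "proper_fun \<phi>" and lsc: "lsc_fun \<phi>"
    using Gamma0 by (simp_all add: Gamma0_def)
  then obtain x where "\<phi> x \<noteq> \<infinity>"
    by (auto simp: proper_fun_def)
  then have "(\<phi> \<circ> \<gamma>) (\<Lambda> a x) \<noteq> \<infinity>" for a
    by simp
  then have "\<exists>X. (\<phi> \<circ> \<gamma>) X \<noteq> \<infinity>"
    by blast
  with proper have "proper_fun (\<phi> \<circ> \<gamma>)"
    by (simp add: proper_fun_def)
  moreover have "lsc_fun (\<phi> \<circ> \<gamma>)"
    unfolding lsc_fun_def
  proof
    fix c
    have "{X. (\<phi> \<circ> \<gamma>) X \<le> c} = \<gamma> -` {x. \<phi> x \<le> c}"
      by auto
    then show "closed {X. (\<phi> \<circ> \<gamma>) X \<le> c}"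
      using lsc continuous_gamma continuous_closed_vimage by (metis lsc_fun_def)
  qed
  ultimately show ?thesis
    using convex_fun_comp_gamma by (simp add: Gamma0_def)
qed

lemma Lambda_in_subdiff_comp_gamma:
  assumes "u \<in> subdiff \<phi> x"
  shows "\<Lambda> a u \<in> subdiff (\<phi> \<circ> \<gamma>) (\<Lambda> a x)"
  unfolding subdiff_def
proof (intro CollectI allI)
  fix Z
  obtain s where s: "s \<in> carrier G" "inner (\<gamma> Z) (\<gamma> (\<Lambda> a u)) = inner (act s (\<gamma> Z)) u"
    using inner_gamma_Lambda by blast
  have "inner (Z - \<Lambda> a x) (\<Lambda> a u) \<le> inner (\<gamma> Z) (\<gamma> (\<Lambda> a u)) - inner x u"
    using inner_le_inner_gamma[of Z "\<Lambda> a u"] by (simp add: inner_diff_left)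
  also have "\<dots> = inner (act s (\<gamma> Z) - x) u"
    using s(2) by (simp add: inner_diff_left)
  finally have "ereal (inner (Z - \<Lambda> a x) (\<Lambda> a u)) + \<phi> x \<le> ereal (inner (act s (\<gamma> Z) - x) u) + \<phi> x"
    by (intro add_right_mono) simp
  also have "\<dots> \<le> \<phi> (act s (\<gamma> Z))"
    using assms by (simp add: subdiff_def)
  finally show "ereal (inner (Z - \<Lambda> a x) (\<Lambda> a u)) + (\<phi> \<circ> \<gamma>) (\<Lambda> a x) \<le> (\<phi> \<circ> \<gamma>) Z"
    using s(1) by simp
qed

lemma subdiff_comp_gammaD:
  assumes "Y \<in> subdiff (\<phi> \<circ> \<gamma>) X"
  shows "inner X Y = inner (\<gamma> X) (\<gamma> Y)" and "\<gamma> Y \<in> subdiff \<phi> (\<gamma> X)"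
proof -
  have sub: "ereal (inner (Z - X) Y) + \<phi> (\<gamma> X) \<le> \<phi> (\<gamma> Z)" for Z
    using assms by (simp add: subdiff_def)
  have "proper_fun (\<phi> \<circ> \<gamma>)"
    using Gamma0_comp_gamma by (simp add: Gamma0_def)
  then obtain m where "(\<phi> \<circ> \<gamma>) X = ereal m"
    using assms by (rule proper_subdiff_finite)
  then have m: "\<phi> (\<gamma> X) = ereal m"
    by simp
  obtain c where c: "Y = \<Lambda> c (\<gamma> Y)"
    by (rule Lambda_gamma)
  have inner_Y: "inner (\<Lambda> c z) Y = inner z (\<gamma> Y)" for z
    by (metis c inner_Lambda)
  have "ereal (inner (\<Lambda> c (\<gamma> X) - X) Y) + \<phi> (\<gamma> X) \<le> \<phi> (\<gamma> X)"
    using sub[of "\<Lambda> c (\<gamma> X)"] by simp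
  then have "inner (\<gamma> X) (\<gamma> Y) \<le> inner X Y"
    using m inner_Y by (simp add: inner_diff_left)
  then show inner_eq: "inner X Y = inner (\<gamma> X) (\<gamma> Y)"
    using inner_le_inner_gamma[of X Y] by simp
  show "\<gamma> Y \<in> subdiff \<phi> (\<gamma> X)"
    unfolding subdiff_def
  proof (intro CollectI allI)
    fix z
    have "inner (z - \<gamma> X) (\<gamma> Y) = inner (\<Lambda> c z - X) Y"
      using inner_Y inner_eq by (simp add: inner_diff_left)
    then show "ereal (inner (z - \<gamma> X) (\<gamma> Y)) + \<phi> (\<gamma> X) \<le> \<phi> z"
      using sub[of "\<Lambda> c z"] by simp
  qed
qed

lemma adjoint_Lambda_in_subdiff:
  assumes "Y \<in> subdiff (\<phi> \<circ> \<gamma>) X" and a: "X = \<Lambda> a (\<gamma> X)"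
  shows "adjoint (\<Lambda> a) Y \<in> subdiff \<phi> (\<gamma> X)"
  unfolding subdiff_def
proof (intro CollectI allI)
  fix z
  have "inner (z - \<gamma> X) (adjoint (\<Lambda> a) Y) = inner (\<Lambda> a (z - \<gamma> X)) Y"
    by (rule adjoint_works[OF Lambda_linear])
  also have "\<dots> = inner (\<Lambda> a z - X) Y"
    using a linear_diff[OF Lambda_linear] by metis
  finally have "inner (z - \<gamma> X) (adjoint (\<Lambda> a) Y) = inner (\<Lambda> a z - X) Y" .
  moreover have "ereal (inner (\<Lambda> a z - X) Y) + (\<phi> \<circ> \<gamma>) X \<le> (\<phi> \<circ> \<gamma>) (\<Lambda> a z)"
    using assms(1) unfolding subdiff_def by blast
  ultimately show "ereal (inner (z - \<gamma> X) (adjoint (\<Lambda> a) Y)) + \<phi> (\<gamma> X) \<le> \<phi> z"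
    by simp
qed

lemma gamma_in_subdiff_at_adjoint_Lambda:
  assumes Y: "Y \<in> subdiff (\<phi> \<circ> \<gamma>) X" and c: "Y = \<Lambda> c (\<gamma> Y)"
  shows "\<gamma> Y \<in> subdiff \<phi> (adjoint (\<Lambda> c) X)"
proof -
  let ?x = "adjoint (\<Lambda> c) X"
  have sub: "\<gamma> Y \<in> subdiff \<phi> (\<gamma> X)"
    by (rule subdiff_comp_gammaD(2)[OF Y])
  have "inner ?x (\<gamma> Y) = inner X Y"
    by (metis adjoint_works[OF Lambda_linear] c inner_commute)
  then have orth: "inner (?x - \<gamma> X) (\<gamma> Y) = 0"
    using subdiff_comp_gammaD(1)[OF Y] by (simp add: inner_diff_left)
  have "\<phi> ?x \<le> \<phi> (\<gamma> X)"
  proof (rule le_if_majorized)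
    fix U
    have "inner ?x U = inner (\<Lambda> c U) X"
      by (metis adjoint_works[OF Lambda_linear] inner_commute)
    also have "\<dots> \<le> inner (\<gamma> X) (\<gamma> (\<Lambda> c U))"
      using inner_le_inner_gamma by (metis inner_commute)
    finally show "inner ?x U \<le> inner (\<gamma> X) (\<gamma> (\<Lambda> c U))" .
  qed
  moreover have "\<phi> (\<gamma> X) \<le> \<phi> ?x"
    using sub orth by (simp add: subdiff_def) (metis add.left_neutral zero_ereal_def)
  ultimately have "\<phi> ?x = ereal (inner (?x - \<gamma> X) (\<gamma> Y)) + \<phi> (\<gamma> X)"
    using orth by simp
  then show ?thesis
    by (rule subdiff_if_on_supporting_hyperplane[OF sub])
qed

lemma essentially_smooth_comp_gamma_iff:
  "essentially_smooth (\<phi> \<circ> \<gamma>) \<longleftrightarrow> essentially_smooth \<phi>"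
proof
  assume smooth: "essentially_smooth (\<phi> \<circ> \<gamma>)"
  show "essentially_smooth \<phi>"
    unfolding essentially_smooth_def
  proof (intro conjI Gamma0 allI ballI)
    fix x u v
    assume "u \<in> subdiff \<phi> x" "v \<in> subdiff \<phi> x"
    then have "\<Lambda> a u \<in> subdiff (\<phi> \<circ> \<gamma>) (\<Lambda> a x)" "\<Lambda> a v \<in> subdiff (\<phi> \<circ> \<gamma>) (\<Lambda> a x)" for a
      by (simp_all add: Lambda_in_subdiff_comp_gamma)
    then have "\<Lambda> a u = \<Lambda> a v" for a
      using smooth unfolding essentially_smooth_def by blast
    then show "u = v"
      using inj_Lambda by (metis injD)
  qed
next
  assume smooth: "essentially_smooth \<phi>"
  show "essentially_smooth (\<phi> \<circ> \<gamma>)"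
    unfolding essentially_smooth_def
  proof (intro conjI Gamma0_comp_gamma allI ballI)
    fix X Y Y'
    assume Y: "Y \<in> subdiff (\<phi> \<circ> \<gamma>) X" and Y': "Y' \<in> subdiff (\<phi> \<circ> \<gamma>) X"
    obtain a where a: "X = \<Lambda> a (\<gamma> X)"
      by (rule Lambda_gamma)
    have unique: "u = v" if "u \<in> subdiff \<phi> (\<gamma> X)" "v \<in> subdiff \<phi> (\<gamma> X)" for u v
      using smooth that by (auto simp: essentially_smooth_def)
    have recover: "\<Lambda> a (\<gamma> Z) = Z" if "Z \<in> subdiff (\<phi> \<circ> \<gamma>) X" for Z
      using unique[OF adjoint_Lambda_in_subdiff[OF that a] subdiff_comp_gammaD(2)[OF that]]
      by (rule Lambda_gamma_if_adjoint_eq)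
    have "\<gamma> Y = \<gamma> Y'"
      using unique subdiff_comp_gammaD(2) Y Y' by blast
    then show "Y = Y'"
      using recover[OF Y] recover[OF Y'] by metis
  qed
qed

lemma injective_subdiff_comp_gamma_iff:
  "injective_subdiff (\<phi> \<circ> \<gamma>) \<longleftrightarrow> injective_subdiff \<phi>"
proof
  assume inj: "injective_subdiff (\<phi> \<circ> \<gamma>)"
  show "injective_subdiff \<phi>"
    unfolding injective_subdiff_def
  proof (intro allI impI)
    fix x y u
    assume "u \<in> subdiff \<phi> x" "u \<in> subdiff \<phi> y"
    then have "\<Lambda> a u \<in> subdiff (\<phi> \<circ> \<gamma>) (\<Lambda> a x)" "\<Lambda> a u \<in> subdiff (\<phi> \<circ> \<gamma>) (\<Lambda> a y)" for a
      by (simp_all add: Lambda_in_subdiff_comp_gamma)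
    then have "\<Lambda> a x = \<Lambda> a y" for a
      using inj unfolding injective_subdiff_def by blast
    then show "x = y"
      using inj_Lambda by (metis injD)
  qed
next
  assume inj: "injective_subdiff \<phi>"
  show "injective_subdiff (\<phi> \<circ> \<gamma>)"
    unfolding injective_subdiff_def
  proof (intro allI impI)
    fix X X' Y
    assume X: "Y \<in> subdiff (\<phi> \<circ> \<gamma>) X" and X': "Y \<in> subdiff (\<phi> \<circ> \<gamma>) X'"
    obtain c where c: "Y = \<Lambda> c (\<gamma> Y)"
      by (rule Lambda_gamma)
    have unique: "x = y" if "\<gamma> Y \<in> subdiff \<phi> x" "\<gamma> Y \<in> subdiff \<phi> y" for x y
      using inj that by (auto simp: injective_subdiff_def)
    have recover: "\<Lambda> c (\<gamma> Z) = Z" if "Y \<in> subdiff (\<phi> \<circ> \<gamma>) Z" for Z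
      using unique[OF gamma_in_subdiff_at_adjoint_Lambda[OF that c] subdiff_comp_gammaD(2)[OF that]]
      by (rule Lambda_gamma_if_adjoint_eq)
    have "\<gamma> X = \<gamma> X'"
      using unique subdiff_comp_gammaD(2) X X' by blast
    then show "X = X'"
      using recover[OF X] recover[OF X'] by metis
  qed
qed

lemma essentially_strictly_convex_comp_gamma_iff:
  "essentially_strictly_convex (\<phi> \<circ> \<gamma>) \<longleftrightarrow> essentially_strictly_convex \<phi>"
  using Gamma0 Gamma0_comp_gamma injective_subdiff_comp_gamma_iff
  by (simp add: essentially_strictly_convex_iff_injective_subdiff)

end

theorem proposition6p1:
  fixes G :: "('g, 'm) monoid_scheme"
    and act :: "'g \<Rightarrow> 'x::euclidean_space \<Rightarrow> 'x"
    and \<gamma> :: "'h::euclidean_space \<Rightarrow> 'x"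
    and \<Lambda> :: "'i \<Rightarrow> 'x \<Rightarrow> 'h"
    and \<phi> :: "'x \<Rightarrow> ereal"
  assumes "spectral_decomposition_system G act \<gamma> \<Lambda>"
    and "\<phi> \<in> Gamma0"
    and "invariant_under G act \<phi>"
  shows "(essentially_smooth (\<phi> \<circ> \<gamma>) \<longleftrightarrow> essentially_smooth \<phi>)
    \<and> (essentially_strictly_convex (\<phi> \<circ> \<gamma>) \<longleftrightarrow> essentially_strictly_convex \<phi>)
    \<and> (legendre_fun (\<phi> \<circ> \<gamma>) \<longleftrightarrow> legendre_fun \<phi>)"
proof -
  interpret spectral_function G act \<gamma> \<Lambda> \<phi>
    by unfold_locales (fact assms)+
  show ?thesis
    using essentially_smooth_comp_gamma_iff essentially_strictly_convex_comp_gamma_iff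
    by (simp add: legendre_fun_def)
qed

end
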